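(* Let $p$ be a prime, $\mathbb{F}=\mathbb{F}_p$, and let $f\in\mathbb{F}[x_1,\dots,x_n]$ be a homogeneous polynomial of degree at most $p-1$. Let $Z=\{x\in\mathbb{F}^n: f(x)=0\}$ and let $a\in\mathbb{F}\setminus\{0\}$ be such that $S=\{x\in\mathbb{F}^n: f(x)=a\}$ is nonempty. Then the $p$-dimensional rectangle $Z\times S\times\cdots\times S$ contains no line with direction $d\in Z$.
   Context: The line through $x\in\mathbb{F}^n$ in direction $d\in\mathbb{F}^n$ is $\ell_{x,d}=(x+\lambda d)_{\lambda\in\mathbb{F}}$; a rectangle $T_1\times\cdots\times T_p$ contains $\ell_{x,d}$ if $x+\lambda d\in T_{\lambda+1}$ for every $\lambda\in\{0,1,\dots,p-1\}$. *)

theory Defs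
  imports "HOL-Analysis.Analysis" "Berlekamp_Zassenhaus.Finite_Field"
begin

text \<open>Multivariate polynomials in the variables indexed by the finite type 'n,
  represented by their coefficient function on exponent vectors (monomials).\<close>

definition monom_eval :: "('n::finite \<Rightarrow> nat) \<Rightarrow> 'a::comm_ring_1 ^ 'n \<Rightarrow> 'a" where
  "monom_eval \<alpha> x = (\<Prod>i\<in>UNIV. (x $ i) ^ (\<alpha> i))"

definition mpoly_eval :: "(('n::finite \<Rightarrow> nat) \<Rightarrow> 'a::comm_ring_1) \<Rightarrow> 'a ^ 'n \<Rightarrow> 'a" where
  "mpoly_eval c x = (\<Sum>\<alpha>\<in>{\<alpha>. c \<alpha> \<noteq> 0}. c \<alpha> * monom_eval \<alpha> x)"

definition homogeneous_of_degree :: "(('n::finite \<Rightarrow> nat) \<Rightarrow> 'a::zero) \<Rightarrow> nat \<Rightarrow> bool" where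
  "homogeneous_of_degree c k \<longleftrightarrow> (\<forall>\<alpha>. c \<alpha> \<noteq> 0 \<longrightarrow> (\<Sum>i\<in>UNIV. \<alpha> i) = k)"

text \<open>The rectangle T 0 x T 1 x ... x T (m-1) (0-indexed) contains the line through x
  in direction d, i.e. x + lambda d is in T lambda for lambda = 0, ..., m-1.\<close>
definition rect_contains_line :: "nat \<Rightarrow> (nat \<Rightarrow> ('a::comm_ring_1 ^ 'n) set) \<Rightarrow> 'a ^ 'n \<Rightarrow> 'a ^ 'n \<Rightarrow> bool" where
  "rect_contains_line m T x d \<longleftrightarrow> (\<forall>t\<in>{0..<m}. x + of_nat t *s d \<in> T t)"

end

theory Submission
  imports Defs
begin

text \<open>Restrict f to the line x + \<lambda>d: this gives a univariate polynomial g(\<lambda>) of degree at most k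
  whose coefficient of \<lambda>^k is f(d), by homogeneity. As f(d) = 0, g has degree at most k - 1 \<le> p - 2.
  But g - a vanishes at every \<lambda> \<noteq> 0, i.e. at p - 1 points, and is nonzero because g(0) = f(x) = 0 \<noteq> a.\<close>

hide_const (open) up_ring.coeff module.smult

lemma coeff_mult_at_degree_bounds:
  fixes p q :: "'a::comm_ring_1 poly"
  assumes "degree p \<le> m" "degree q \<le> n"
  shows "coeff (p * q) (m + n) = coeff p m * coeff q n"
proof (cases "degree p = m \<and> degree q = n")
  case True
  then show ?thesis using coeff_mult_degree_sum[of p q] by simp
next
  case False
  then have lt: "degree p < m \<or> degree q < n" using assms by linarith
  then have "degree (p * q) < m + n"
    using degree_mult_le[of p q] assms by linarith
  moreover have "coeff p m = 0 \<or> coeff q n = 0"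
    using lt coeff_eq_0[of p m] coeff_eq_0[of q n] by blast
  ultimately show ?thesis by (auto intro: coeff_eq_0)
qed

lemma degree_coeff_prod_le:
  fixes q :: "'b \<Rightarrow> 'a::comm_ring_1 poly"
  assumes "finite A" "\<And>i. i \<in> A \<Longrightarrow> degree (q i) \<le> n i"
  shows "degree (prod q A) \<le> sum n A \<and> coeff (prod q A) (sum n A) = (\<Prod>i\<in>A. coeff (q i) (n i))"
  using assms
proof (induction A rule: finite_induct)
  case empty
  then show ?case by simp
next
  case (insert a A)
  then have IH: "degree (prod q A) \<le> sum n A"
    "coeff (prod q A) (sum n A) = (\<Prod>i\<in>A. coeff (q i) (n i))" by auto
  have deg_a: "degree (q a) \<le> n a" using insert by auto
  have "degree (q a * prod q A) \<le> n a + sum n A"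
    using degree_mult_le[of "q a" "prod q A"] IH(1) deg_a by linarith
  moreover have "coeff (q a * prod q A) (n a + sum n A) = coeff (q a) (n a) * coeff (prod q A) (sum n A)"
    by (rule coeff_mult_at_degree_bounds[OF deg_a IH(1)])
  ultimately show ?case using insert IH by simp
qed

lemma degree_coeff_power_le:
  fixes q :: "'a::comm_ring_1 poly"
  assumes "degree q \<le> 1"
  shows "degree (q ^ m) \<le> m \<and> coeff (q ^ m) m = coeff q 1 ^ m"
  using degree_coeff_prod_le[of "{..<m}" "\<lambda>_. q" "\<lambda>_. 1"] assms by simp

definition monom_line :: "('n::finite \<Rightarrow> nat) \<Rightarrow> 'a::comm_ring_1 ^ 'n \<Rightarrow> 'a ^ 'n \<Rightarrow> 'a poly" where
  "monom_line \<alpha> x d = (\<Prod>i\<in>UNIV. [:x $ i, d $ i:] ^ \<alpha> i)"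

definition mpoly_line :: "(('n::finite \<Rightarrow> nat) \<Rightarrow> 'a::comm_ring_1) \<Rightarrow> 'a ^ 'n \<Rightarrow> 'a ^ 'n \<Rightarrow> 'a poly" where
  "mpoly_line c x d = (\<Sum>\<alpha>\<in>{\<alpha>. c \<alpha> \<noteq> 0}. smult (c \<alpha>) (monom_line \<alpha> x d))"

lemma poly_monom_line: "poly (monom_line \<alpha> x d) l = monom_eval \<alpha> (x + l *s d)"
  unfolding monom_line_def monom_eval_def by (simp add: poly_prod algebra_simps)

lemma degree_coeff_monom_line:
  "degree (monom_line \<alpha> x d) \<le> sum \<alpha> UNIV \<and> coeff (monom_line \<alpha> x d) (sum \<alpha> UNIV) = monom_eval \<alpha> d"
proof -
  have "degree ([:x $ i, d $ i:] ^ \<alpha> i) \<le> \<alpha> i \<and> coeff ([:x $ i, d $ i:] ^ \<alpha> i) (\<alpha> i) = (d $ i) ^ \<alpha> i"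
    for i using degree_coeff_power_le[of "[:x $ i, d $ i:]" "\<alpha> i"] by simp
  then show ?thesis
    unfolding monom_line_def monom_eval_def
    using degree_coeff_prod_le[of UNIV "\<lambda>i. [:x $ i, d $ i:] ^ \<alpha> i" \<alpha>] by simp
qed

lemma poly_mpoly_line: "poly (mpoly_line c x d) l = mpoly_eval c (x + l *s d)"
  unfolding mpoly_line_def mpoly_eval_def by (simp add: poly_sum poly_monom_line)

text \<open>No finiteness hypothesis on the support is needed: for infinite support
  mpoly_line and mpoly_eval are both the empty-sum junk value 0.\<close>

lemma degree_mpoly_line_le:
  assumes "homogeneous_of_degree c k"
  shows "degree (mpoly_line c x d) \<le> k"
proof (cases "finite {\<alpha>. c \<alpha> \<noteq> 0}")
  case True
  show ?thesis
    unfolding mpoly_line_def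
  proof (rule degree_sum_le[OF True])
    fix \<alpha> assume "\<alpha> \<in> {\<alpha>. c \<alpha> \<noteq> 0}"
    then have "sum \<alpha> UNIV = k" using assms unfolding homogeneous_of_degree_def by auto
    then show "degree (smult (c \<alpha>) (monom_line \<alpha> x d)) \<le> k"
      using degree_coeff_monom_line[of \<alpha> x d] degree_smult_le[of "c \<alpha>" "monom_line \<alpha> x d"]
      by linarith
  qed
qed (simp add: mpoly_line_def)

lemma coeff_mpoly_line_degree:
  assumes "homogeneous_of_degree c k"
  shows "coeff (mpoly_line c x d) k = mpoly_eval c d"
proof -
  have "coeff (mpoly_line c x d) k = (\<Sum>\<alpha>\<in>{\<alpha>. c \<alpha> \<noteq> 0}. c \<alpha> * monom_eval \<alpha> d)"
    unfolding mpoly_line_def coeff_sum coeff_smult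
  proof (rule sum.cong[OF refl])
    fix \<alpha> assume "\<alpha> \<in> {\<alpha>. c \<alpha> \<noteq> 0}"
    then have "sum \<alpha> UNIV = k" using assms unfolding homogeneous_of_degree_def by auto
    then show "c \<alpha> * coeff (monom_line \<alpha> x d) k = c \<alpha> * monom_eval \<alpha> d"
      using degree_coeff_monom_line[of \<alpha> x d] by simp
  qed
  then show ?thesis unfolding mpoly_eval_def .
qed

lemma degree_mpoly_line_isotropic:
  assumes "homogeneous_of_degree c k" "mpoly_eval c d = 0"
  shows "degree (mpoly_line c x d) \<le> k - 1"
proof (cases "degree (mpoly_line c x d) = k")
  case True
  then have "mpoly_line c x d = 0"
    using coeff_mpoly_line_degree[OF assms(1), of x d] assms(2) by (metis leading_coeff_0_iff)
  then show ?thesis by simp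
next
  case False
  then show ?thesis using degree_mpoly_line_le[OF assms(1), of x d] by linarith
qed

lemma degree_ge_if_vanishes_off_zero:
  fixes h :: "'a::{idom, finite} poly"
  assumes "h \<noteq> 0" "\<And>l. l \<noteq> 0 \<Longrightarrow> poly h l = 0"
  shows "CARD('a) - 1 \<le> degree h"
proof -
  have "CARD('a) - 1 = card (UNIV - {0 :: 'a})" by (simp add: card_Diff_singleton)
  also have "\<dots> \<le> card {l. poly h l = 0}"
    using assms by (intro card_mono poly_roots_finite) auto
  also have "\<dots> \<le> degree h" by (rule card_poly_roots_bound[OF assms(1)])
  finally show ?thesis .
qed

lemma nonzero_mod_ring_of_nat:
  assumes "(l :: 'p::prime_card mod_ring) \<noteq> 0"
  obtains t where "0 < t" "t < CARD('p)" "l = of_nat t"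
  using surj_of_nat_mod_ring[of l] assms by (metis gr0I of_nat_0)

theorem lemma3p4:
  fixes f :: "('n::finite \<Rightarrow> nat) \<Rightarrow> 'p::prime_card mod_ring"
    and k :: nat and a :: "'p mod_ring"
  assumes "homogeneous_of_degree f k"
    and "k \<le> CARD('p) - 1"
    and "a \<noteq> 0"
    and "{x. mpoly_eval f x = a} \<noteq> {}"
  shows "\<not> (\<exists>x d. d \<in> {x. mpoly_eval f x = 0} \<and>
            rect_contains_line CARD('p)
              (\<lambda>i. if i = 0 then {x. mpoly_eval f x = 0} else {x. mpoly_eval f x = a}) x d)"
proof
  assume "\<exists>x d. d \<in> {x. mpoly_eval f x = 0} \<and>
            rect_contains_line CARD('p)
              (\<lambda>i. if i = 0 then {x. mpoly_eval f x = 0} else {x. mpoly_eval f x = a}) x d"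
  then obtain x d where fd: "mpoly_eval f d = 0"
    and on_line: "\<forall>t\<in>{0..<CARD('p)}. x + of_nat t *s d \<in>
      (if t = 0 then {x. mpoly_eval f x = 0} else {x. mpoly_eval f x = a})"
    unfolding rect_contains_line_def by blast
  have line: "mpoly_eval f (x + of_nat t *s d) = (if t = 0 then 0 else a)" if "t < CARD('p)" for t
    using on_line[rule_format, of t] that by (cases "t = 0") auto
  define h where "h = mpoly_line f x d - [:a:]"
  have "poly h 0 = - a"
    using line[of 0] unfolding h_def by (simp add: poly_mpoly_line)
  then have "h \<noteq> 0" using assms(3) by auto
  moreover have "poly h l = 0" if "l \<noteq> 0" for l
    using line that unfolding h_def
    by (elim nonzero_mod_ring_of_nat) (simp add: poly_mpoly_line)
  ultimately have "CARD('p) - 1 \<le> degree h"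
    using degree_ge_if_vanishes_off_zero[of h] by simp
  moreover have "degree h \<le> k - 1"
    unfolding h_def using degree_mpoly_line_isotropic[OF assms(1) fd, of x]
    by (intro degree_diff_le) auto
  moreover have "CARD('p) \<ge> 2" using prime_card prime_ge_2_nat by blast
  ultimately show False using assms(2) by linarith
qed

end
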